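(* Let $\mathsf{CS}$ be a constant specification for $\mathsf{LPC}^+$. For every set of formulas $T$ and formula $\phi$: if $T\models_{\mathsf{LPC}^+_{\mathsf{CS}}}\phi$, then $T\vdash_{\mathsf{LPC}^+_{\mathsf{CS}}}\phi$.
   Context: Language: countable sets $\mathsf{Const}$, $\mathsf{Var}$, $\mathsf{Prop}$; terms $t ::= c \mid x \mid t\cdot t \mid t+t \mid\ !t$; formulas $\phi ::= p \mid \neg\phi \mid \phi\wedge\phi \mid \phi\supset\phi \mid \phi>\phi \mid t{:}\phi$; $\mathsf{Tm},\mathsf{Fm}$ the sets of terms and formulas. Axiom schemes of $\mathsf{LPC}^+$: (A1) all instances of classical tautologies; (A2) $(\phi>(\psi\supset\chi))\supset((\phi>\psi)\supset(\phi>\chi))$; (A3) $\phi>\phi$; (A4) $(\phi>\psi)\supset(\phi\supset\psi)$; (A5) $(s{:}(\phi>\psi)\wedge t{:}\phi) > (s\cdot t){:}\psi$; (A6) $s{:}\phi > (s+t){:}\phi$; (A7) $t{:}\phi>(s+t){:}\phi$; (A8) $t{:}\phi>\phi$; (A9) $t{:}\phi > (!t){:}t{:}\phi$. A constant specification $\mathsf{CS}$ is a set of $c{:}\phi$ with $c\in\mathsf{Const}$, $\phi$ an instance of (A1)–(A9). $\mathsf{LPC}^+_{\mathsf{CS}}$: axioms (A1)–(A9) and $\mathsf{CS}$; rules (MP) from $\phi,\phi\supset\psi$ infer $\psi$, and (RCN) from $\psi$ infer $\phi>\psi$. For a set $T$: $T\vdash\phi$ iff $\vdash(\psi_1\wedge\cdots\wedge\psi_n)\supset\phi$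 for some $\psi_1,\dots,\psi_n\in T$, $n\ge0$. Relational models $\mathcal M=(W,W_N,R_{Fm},R_{Tm},V)$: $W$ nonempty, $W_N\subseteq W$ nonempty (normal states); $R_\phi\subseteq W_N\times W_N$ for each formula $\phi$; $R_t\subseteq W\times W$ for each term $t$; $V(w)\subseteq\mathsf{Prop}$ for $w\in W_N$, $V(w)\subseteq\mathsf{Fm}$ for $w\in W\setminus W_N$. Truth: at non-normal $w$, $w\models\phi$ iff $\phi\in V(w)$; at normal $w$: $p$ iff $p\in V(w)$, $\neg,\wedge,\supset$ classical, $\phi>\psi$ iff $R_\phi(w)\subseteq[\psi]$, $t{:}\phi$ iff $R_t(w)\subseteq[\phi]$, with $[\phi]=\{w\in W: w\models\phi\}$. An $\mathsf{LPC}^+_{\mathsf{CS}}$-model is a relational model such that for all $w\in W_N$: (1) $R_\phi(w)\subseteq[\phi]$ for all $\phi$; (2) if $w\in[\phi]$ then $w\in R_\phi(w)$; (3) $R_c(w)\subseteq[\phi]$ for each $c{:}\phi\in\mathsf{CS}$; (4) $R_{s+t}(w)\subseteq R_s(w)\cap R_t(w)$; (5) for all $v\in R_{s\cdot t}(w)$ and all $\phi,\psi$: if $w\in[s{:}(\phi>\psi)\wedge t{:}\phi]$ then $v\in[\psi]$; (6) $wR_tw$ for all $t$; (7) for all $t$ and $v,u\in W$, if $wR_{!t}v$ and $vR_tu$ then $wR_tu$. $T\models_{\mathsf{LPC}^+_{\mathsf{CS}}}\phi$ iff for every $\mathsf{LPC}^+_{\mathsf{CS}}$-model and every $w\in W_N$,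 if every member of $T$ is true at $w$ then $\phi$ is true at $w$. *)

theory Defs
  imports Main "HOL-Library.Countable"
begin

datatype ('c, 'v) tm =
    TConst 'c
  | TVar 'v
  | TApp "('c, 'v) tm" "('c, 'v) tm"
  | TSum "('c, 'v) tm" "('c, 'v) tm"
  | TBang "('c, 'v) tm"

datatype ('c, 'v, 'p) fm =
    Atom 'p
  | Neg "('c, 'v, 'p) fm"
  | Conj "('c, 'v, 'p) fm" "('c, 'v, 'p) fm"
  | Imp "('c, 'v, 'p) fm" "('c, 'v, 'p) fm"
  | Cond "('c, 'v, 'p) fm" "('c, 'v, 'p) fm"
  | Just "('c, 'v) tm" "('c, 'v, 'p) fm"

fun peval :: "(('c, 'v, 'p) fm \<Rightarrow> bool) \<Rightarrow> ('c, 'v, 'p) fm \<Rightarrow> bool" where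
  "peval v (Neg a) = (\<not> peval v a)"
| "peval v (Conj a b) = (peval v a \<and> peval v b)"
| "peval v (Imp a b) = (peval v a \<longrightarrow> peval v b)"
| "peval v (Atom p) = v (Atom p)"
| "peval v (Cond a b) = v (Cond a b)"
| "peval v (Just t a) = v (Just t a)"

definition taut_instance :: "('c, 'v, 'p) fm \<Rightarrow> bool" where
  "taut_instance \<phi> \<longleftrightarrow> (\<forall>v. peval v \<phi>)"

definition is_axiom :: "('c, 'v, 'p) fm \<Rightarrow> bool" where
  "is_axiom \<chi> \<longleftrightarrow>
     taut_instance \<chi>
   \<or> (\<exists>\<phi> \<psi> \<theta>. \<chi> = Imp (Cond \<phi> (Imp \<psi> \<theta>)) (Imp (Cond \<phi> \<psi>) (Cond \<phi> \<theta>)))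
   \<or> (\<exists>\<phi>. \<chi> = Cond \<phi> \<phi>)
   \<or> (\<exists>\<phi> \<psi>. \<chi> = Imp (Cond \<phi> \<psi>) (Imp \<phi> \<psi>))
   \<or> (\<exists>s t \<phi> \<psi>. \<chi> = Cond (Conj (Just s (Cond \<phi> \<psi>)) (Just t \<phi>)) (Just (TApp s t) \<psi>))
   \<or> (\<exists>s t \<phi>. \<chi> = Cond (Just s \<phi>) (Just (TSum s t) \<phi>))
   \<or> (\<exists>s t \<phi>. \<chi> = Cond (Just t \<phi>) (Just (TSum s t) \<phi>))
   \<or> (\<exists>t \<phi>. \<chi> = Cond (Just t \<phi>) \<phi>)
   \<or> (\<exists>t \<phi>. \<chi> = Cond (Just t \<phi>) (Just (TBang t) (Just t \<phi>)))"

definition const_spec :: "('c, 'v, 'p) fm set \<Rightarrow> bool" where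
  "const_spec CS \<longleftrightarrow> (\<forall>\<chi>\<in>CS. \<exists>c \<phi>. \<chi> = Just (TConst c) \<phi> \<and> is_axiom \<phi>)"

inductive deriv :: "('c, 'v, 'p) fm set \<Rightarrow> ('c, 'v, 'p) fm \<Rightarrow> bool" for CS where
  ax: "is_axiom \<phi> \<Longrightarrow> deriv CS \<phi>"
| cs: "\<phi> \<in> CS \<Longrightarrow> deriv CS \<phi>"
| mp: "deriv CS \<phi> \<Longrightarrow> deriv CS (Imp \<phi> \<psi>) \<Longrightarrow> deriv CS \<psi>"
| rcn: "deriv CS \<psi> \<Longrightarrow> deriv CS (Cond \<phi> \<psi>)"

fun conjs :: "('c, 'v, 'p) fm list \<Rightarrow> ('c, 'v, 'p) fm" where
  "conjs [] = undefined"
| "conjs [a] = a"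
| "conjs (a # b # xs) = Conj a (conjs (b # xs))"

definition derives :: "('c, 'v, 'p) fm set \<Rightarrow> ('c, 'v, 'p) fm set \<Rightarrow> ('c, 'v, 'p) fm \<Rightarrow> bool" where
  "derives CS T \<phi> \<longleftrightarrow>
     deriv CS \<phi> \<or> (\<exists>\<psi>s. \<psi>s \<noteq> [] \<and> set \<psi>s \<subseteq> T \<and> deriv CS (Imp (conjs \<psi>s) \<phi>))"

record ('w, 'c, 'v, 'p) rmodel =
  W  :: "'w set"
  WN :: "'w set"
  RF :: "('c, 'v, 'p) fm \<Rightarrow> 'w \<Rightarrow> 'w set"
  RT :: "('c, 'v) tm \<Rightarrow> 'w \<Rightarrow> 'w set"
  V  :: "'w \<Rightarrow> ('c, 'v, 'p) fm set"

text \<open>At normal states the propositional valuation is V(w) restricted to atoms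
  (we require V(w) to consist of atoms there); at non-normal states V(w) is a set
  of formulas.\<close>
fun sat :: "('w, 'c, 'v, 'p) rmodel \<Rightarrow> 'w \<Rightarrow> ('c, 'v, 'p) fm \<Rightarrow> bool" where
  "sat M w (Atom p) = (Atom p \<in> V M w)"
| "sat M w (Neg a) =
     (if w \<in> WN M then \<not> sat M w a else Neg a \<in> V M w)"
| "sat M w (Conj a b) =
     (if w \<in> WN M then sat M w a \<and> sat M w b else Conj a b \<in> V M w)"
| "sat M w (Imp a b) =
     (if w \<in> WN M then sat M w a \<longrightarrow> sat M w b else Imp a b \<in> V M w)"
| "sat M w (Cond a b) =
     (if w \<in> WN M then (\<forall>u \<in> RF M a w. u \<in> W M \<and> sat M u b) else Cond a b \<in> V M w)"
| "sat M w (Just t a) =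
     (if w \<in> WN M then (\<forall>u \<in> RT M t w. u \<in> W M \<and> sat M u a) else Just t a \<in> V M w)"

definition ext :: "('w, 'c, 'v, 'p) rmodel \<Rightarrow> ('c, 'v, 'p) fm \<Rightarrow> 'w set" where
  "ext M \<phi> = {u \<in> W M. sat M u \<phi>}"

definition rel_model :: "('w, 'c, 'v, 'p) rmodel \<Rightarrow> bool" where
  "rel_model M \<longleftrightarrow>
     W M \<noteq> {} \<and> WN M \<noteq> {} \<and> WN M \<subseteq> W M
   \<and> (\<forall>\<phi> w. RF M \<phi> w \<subseteq> WN M \<and> (w \<notin> WN M \<longrightarrow> RF M \<phi> w = {}))
   \<and> (\<forall>t w. RT M t w \<subseteq> W M \<and> (w \<notin> W M \<longrightarrow> RT M t w = {}))
   \<and> (\<forall>w \<in> WN M. V M w \<subseteq> range Atom)"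

definition lpc_model :: "('c, 'v, 'p) fm set \<Rightarrow> ('w, 'c, 'v, 'p) rmodel \<Rightarrow> bool" where
  "lpc_model CS M \<longleftrightarrow> rel_model M \<and>
    (\<forall>w \<in> WN M.
        (\<forall>\<phi>. RF M \<phi> w \<subseteq> ext M \<phi>)
      \<and> (\<forall>\<phi>. w \<in> ext M \<phi> \<longrightarrow> w \<in> RF M \<phi> w)
      \<and> (\<forall>c \<phi>. Just (TConst c) \<phi> \<in> CS \<longrightarrow> RT M (TConst c) w \<subseteq> ext M \<phi>)
      \<and> (\<forall>s t. RT M (TSum s t) w \<subseteq> RT M s w \<inter> RT M t w)
      \<and> (\<forall>s t. \<forall>v \<in> RT M (TApp s t) w. \<forall>\<phi> \<psi>.
            w \<in> ext M (Conj (Just s (Cond \<phi> \<psi>)) (Just t \<phi>)) \<longrightarrow> v \<in> ext M \<psi>)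
      \<and> (\<forall>t. w \<in> RT M t w)
      \<and> (\<forall>t. \<forall>v \<in> W M. \<forall>u \<in> W M. v \<in> RT M (TBang t) w \<and> u \<in> RT M t v \<longrightarrow> u \<in> RT M t w))"

text \<open>HOL cannot quantify over all types of states; we
  quantify over all models whose states are drawn from the (large) type of sets
  of sets of formulas. This makes the hypothesis of completeness weaker, hence
  the completeness statement stronger than (and implying) the informal one.\<close>
definition sem_conseq ::
  "('c, 'v, 'p) fm set \<Rightarrow> ('c, 'v, 'p) fm set \<Rightarrow> ('c, 'v, 'p) fm \<Rightarrow> bool" where
  "sem_conseq CS T \<phi> \<longleftrightarrow>
     (\<forall>M :: (('c, 'v, 'p) fm set set, 'c, 'v, 'p) rmodel.
        lpc_model CS M \<longrightarrow> (\<forall>w \<in> WN M. (\<forall>\<psi> \<in> T. sat M w \<psi>) \<longrightarrow> sat M w \<phi>))"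

end

theory Submission
  imports Defs
begin

text \<open>Canonical model argument. Normal states are the maximal consistent sets \<open>G\<close> (encoded
  as singletons \<open>{G}\<close>); every other set of sets \<open>u\<close> is a non-normal state forcing exactly
  \<open>\<Union>u\<close>. \<open>R\<^sub>\<phi>\<close> links \<open>G\<close> to the maximal consistent sets containing \<open>\<phi>\<close> and every
  \<open>\<psi>\<close> with \<open>\<phi> > \<psi> \<in> G\<close>; \<open>R\<^sub>t\<close> links \<open>G\<close> to itself and to the non-normal states forcing
  every \<open>\<psi>\<close> with \<open>t:\<psi> \<in> G\<close>. Non-normal states make the truth lemma for \<open>t:\<psi>\<close> trivial
  and, having no successors, validate the frame condition for \<open>!t\<close>; reflexivity of \<open>R\<^sub>t\<close> is
  justified by factivity (A8). A non-derivable \<open>\<phi>\<close> then fails at a maximal consistent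
  extension of \<open>T \<union> {\<not>\<phi>}\<close>.\<close>

fun imps :: "('c, 'v, 'p) fm list \<Rightarrow> ('c, 'v, 'p) fm \<Rightarrow> ('c, 'v, 'p) fm" where
  "imps [] b = b"
| "imps (a # as) b = Imp a (imps as b)"

lemma peval_imps [simp]: "peval v (imps as b) \<longleftrightarrow> ((\<forall>a\<in>set as. peval v a) \<longrightarrow> peval v b)"
  by (induction as) auto

lemma peval_conjs: "as \<noteq> [] \<Longrightarrow> peval v (conjs as) \<longleftrightarrow> (\<forall>a\<in>set as. peval v a)"
  by (induction as rule: conjs.induct) auto

definition falsum :: "('c, 'v, 'p) fm" where
  "falsum = Neg (Imp undefined undefined)"

lemma peval_falsum [simp]: "\<not> peval v falsum"
  by (simp add: falsum_def)

lemma deriv_imps: "deriv CS (imps as b) \<Longrightarrow> \<forall>a\<in>set as. deriv CS a \<Longrightarrow> deriv CS b"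
  by (induction as) (auto intro: deriv.mp)

lemma deriv_taut: "(\<And>v. peval v (imps as b)) \<Longrightarrow> \<forall>a\<in>set as. deriv CS a \<Longrightarrow> deriv CS b"
  by (rule deriv_imps, rule deriv.ax) (auto simp: is_axiom_def taut_instance_def)

definition derivable_from :: "('c, 'v, 'p) fm set \<Rightarrow> ('c, 'v, 'p) fm set \<Rightarrow> ('c, 'v, 'p) fm \<Rightarrow> bool" where
  "derivable_from CS G a \<longleftrightarrow> (\<exists>ps. set ps \<subseteq> G \<and> deriv CS (imps ps a))"

lemma derivable_from_deriv: "deriv CS a \<Longrightarrow> derivable_from CS G a"
  unfolding derivable_from_def by (rule exI[of _ "[]"]) simp

lemma derivable_from_mem: "a \<in> G \<Longrightarrow> derivable_from CS G a"
  unfolding derivable_from_def by (rule exI[of _ "[a]"]) (auto intro: deriv_taut[of "[]"])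

lemma derivable_from_mp:
  assumes "derivable_from CS G a" and "derivable_from CS G (Imp a b)"
  shows "derivable_from CS G b"
proof -
  obtain ps qs where ps: "set ps \<subseteq> G" "deriv CS (imps ps a)"
    and qs: "set qs \<subseteq> G" "deriv CS (imps qs (Imp a b))"
    using assms unfolding derivable_from_def by blast
  have "deriv CS (imps (ps @ qs) b)"
    by (rule deriv_taut[of "[imps ps a, imps qs (Imp a b)]"]) (use ps qs in auto)
  then show ?thesis
    unfolding derivable_from_def using ps qs by (intro exI[of _ "ps @ qs"]) auto
qed

lemma derivable_from_taut:
  "(\<And>v. peval v (imps as b)) \<Longrightarrow> \<forall>a\<in>set as. derivable_from CS G a \<Longrightarrow> derivable_from CS G b"
proof (induction as arbitrary: b)
  case Nil
  then show ?case by (intro derivable_from_deriv deriv.ax) (simp add: is_axiom_def taut_instance_def)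
next
  case (Cons a as)
  then have "derivable_from CS G (Imp a b)" by auto
  then show ?case using Cons.prems(2) by (auto intro: derivable_from_mp)
qed

lemma derivable_from_deduction:
  assumes "derivable_from CS (insert a G) b"
  shows "derivable_from CS G (Imp a b)"
proof -
  obtain ps where ps: "set ps \<subseteq> insert a G" "deriv CS (imps ps b)"
    using assms unfolding derivable_from_def by blast
  let ?qs = "filter (\<lambda>x. x \<noteq> a) ps"
  have "deriv CS (imps ?qs (Imp a b))"
    by (rule deriv_taut[of "[imps ps b]"]) (use ps in auto)
  then show ?thesis
    unfolding derivable_from_def using ps by (intro exI[of _ ?qs]) auto
qed

lemma derivable_from_imp_derives:
  assumes "derivable_from CS T a"
  shows "derives CS T a"
proof -
  obtain ps where ps: "set ps \<subseteq> T" "deriv CS (imps ps a)"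
    using assms unfolding derivable_from_def by blast
  show ?thesis
  proof (cases "ps = []")
    case True
    then show ?thesis using ps unfolding derives_def by simp
  next
    case False
    have "deriv CS (Imp (conjs ps) a)"
      by (rule deriv_taut[of "[imps ps a]"]) (use ps peval_conjs[OF False] in auto)
    then show ?thesis using False ps unfolding derives_def by blast
  qed
qed

definition consistent :: "('c, 'v, 'p) fm set \<Rightarrow> ('c, 'v, 'p) fm set \<Rightarrow> bool" where
  "consistent CS G \<longleftrightarrow> \<not> derivable_from CS G falsum"

definition maximal_consistent :: "('c, 'v, 'p) fm set \<Rightarrow> ('c, 'v, 'p) fm set \<Rightarrow> bool" where
  "maximal_consistent CS G \<longleftrightarrow> consistent CS G \<and> (\<forall>a. a \<notin> G \<longrightarrow> \<not> consistent CS (insert a G))"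

lemma inconsistent_insert_Neg:
  assumes "\<not> consistent CS (insert (Neg a) G)"
  shows "derivable_from CS G a"
proof -
  have "derivable_from CS G (Imp (Neg a) falsum)"
    using assms unfolding consistent_def by (rule derivable_from_deduction[OF notnotD])
  then show ?thesis using derivable_from_taut[of "[Imp (Neg a) falsum]" a CS G] by simp
qed

lemma consistent_Union_chain:
  assumes "subset.chain {D. G \<subseteq> D \<and> consistent CS D} C" and "C \<noteq> {}"
  shows "consistent CS (\<Union>C)"
  unfolding consistent_def derivable_from_def
proof
  assume "\<exists>ps. set ps \<subseteq> \<Union>C \<and> deriv CS (imps ps falsum)"
  then obtain ps where ps: "set ps \<subseteq> \<Union>C" "deriv CS (imps ps falsum)" by blast
  obtain D where D: "D \<in> C" "set ps \<subseteq> D"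
    using finite_subset_Union_chain[OF finite_set ps(1) assms(2,1)] .
  have "consistent CS D" using assms(1) D(1) unfolding subset.chain_def by blast
  then show False using D(2) ps(2) unfolding consistent_def derivable_from_def by blast
qed

lemma lindenbaum:
  assumes "consistent CS G"
  obtains D where "maximal_consistent CS D" and "G \<subseteq> D"
proof -
  let ?A = "{D. G \<subseteq> D \<and> consistent CS D}"
  have "\<exists>M\<in>?A. \<forall>X\<in>?A. M \<subseteq> X \<longrightarrow> X = M"
  proof (rule subset_Zorn_nonempty)
    show "?A \<noteq> {}" using assms by blast
    fix C assume C: "C \<noteq> {}" "subset.chain ?A C"
    then have "G \<subseteq> \<Union>C" unfolding subset.chain_def by blast
    with consistent_Union_chain[OF C(2,1)] show "\<Union>C \<in> ?A" by blast
  qed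
  then obtain M where M: "G \<subseteq> M" "consistent CS M" and max: "\<forall>X\<in>?A. M \<subseteq> X \<longrightarrow> X = M"
    by blast
  have "\<not> consistent CS (insert a M)" if "a \<notin> M" for a
  proof
    assume "consistent CS (insert a M)"
    then have "insert a M = M" using max M(1) by blast
    then show False using that by blast
  qed
  then have "maximal_consistent CS M" unfolding maximal_consistent_def using M(2) by blast
  then show thesis using M(1) that by blast
qed

lemma mcs_not_mem:
  assumes "maximal_consistent CS G" and "a \<notin> G"
  shows "derivable_from CS G (Imp a falsum)"
  using assms unfolding maximal_consistent_def consistent_def
  by (blast intro: derivable_from_deduction)

lemma mcs_derivable_from:
  assumes G: "maximal_consistent CS G" and "derivable_from CS G a"
  shows "a \<in> G"
proof (rule ccontr)
  assume "a \<notin> G"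
  with G have "derivable_from CS G (Imp a falsum)" by (rule mcs_not_mem)
  with assms(2) have "derivable_from CS G falsum" by (rule derivable_from_mp)
  then show False using G unfolding maximal_consistent_def consistent_def by blast
qed

lemma mcs_deriv: "maximal_consistent CS G \<Longrightarrow> deriv CS a \<Longrightarrow> a \<in> G"
  by (blast intro: mcs_derivable_from derivable_from_deriv)

lemma mcs_axiom: "maximal_consistent CS G \<Longrightarrow> is_axiom a \<Longrightarrow> a \<in> G"
  by (blast intro: mcs_deriv deriv.ax)

lemma mcs_taut:
  "maximal_consistent CS G \<Longrightarrow> (\<And>v. peval v (imps as b)) \<Longrightarrow> set as \<subseteq> G \<Longrightarrow> b \<in> G"
  by (rule mcs_derivable_from, assumption, rule derivable_from_taut) (auto intro: derivable_from_mem)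

lemma mcs_falsum: "maximal_consistent CS G \<Longrightarrow> falsum \<notin> G"
  unfolding maximal_consistent_def consistent_def by (blast intro: derivable_from_mem)

lemma mcs_Neg:
  assumes G: "maximal_consistent CS G"
  shows "Neg a \<in> G \<longleftrightarrow> a \<notin> G"
proof
  show "a \<notin> G" if "Neg a \<in> G"
    using mcs_taut[OF G, of "[a, Neg a]" falsum] that mcs_falsum[OF G] by auto
  show "Neg a \<in> G" if "a \<notin> G"
  proof -
    have "Imp a falsum \<in> G" using G mcs_not_mem[OF G that] by (rule mcs_derivable_from)
    then show ?thesis using mcs_taut[OF G, of "[Imp a falsum]"] by auto
  qed
qed

lemma mcs_Conj: "maximal_consistent CS G \<Longrightarrow> Conj a b \<in> G \<longleftrightarrow> a \<in> G \<and> b \<in> G"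
  by (auto intro: mcs_taut[of _ _ "[Conj a b]"] mcs_taut[of _ _ "[a, b]"])

lemma mcs_Imp: "maximal_consistent CS G \<Longrightarrow> Imp a b \<in> G \<longleftrightarrow> (a \<in> G \<longrightarrow> b \<in> G)"
proof (cases "a \<in> G")
  case False
  moreover assume G: "maximal_consistent CS G"
  ultimately have "Neg a \<in> G" by (simp add: mcs_Neg)
  then show ?thesis using G False by (auto intro: mcs_taut[of _ _ "[Neg a]"])
qed (auto intro: mcs_taut[of _ _ "[a, Imp a b]"] mcs_taut[of _ _ "[b]"])

lemma is_axiom_Cond_K: "is_axiom (Imp (Cond a (Imp b c)) (Imp (Cond a b) (Cond a c)))"
  and is_axiom_Cond_refl: "is_axiom (Cond a a)"
  and is_axiom_Cond_mp: "is_axiom (Imp (Cond a b) (Imp a b))"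
  and is_axiom_Just_app: "is_axiom (Cond (Conj (Just s (Cond a b)) (Just t a)) (Just (TApp s t) b))"
  and is_axiom_Just_sum_left: "is_axiom (Cond (Just s a) (Just (TSum s t) a))"
  and is_axiom_Just_sum_right: "is_axiom (Cond (Just t a) (Just (TSum s t) a))"
  and is_axiom_Just_factive: "is_axiom (Cond (Just t a) a)"
  unfolding is_axiom_def by blast+

lemma mcs_Cond_mp: "maximal_consistent CS G \<Longrightarrow> Cond a b \<in> G \<Longrightarrow> a \<in> G \<Longrightarrow> b \<in> G"
  using mcs_axiom[OF _ is_axiom_Cond_mp] mcs_Imp by blast

lemma mcs_Cond_K:
  "maximal_consistent CS G \<Longrightarrow> Cond a (Imp b c) \<in> G \<Longrightarrow> Cond a b \<in> G \<Longrightarrow> Cond a c \<in> G"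
  using mcs_axiom[OF _ is_axiom_Cond_K] mcs_Imp by blast

lemma mcs_Cond_closed:
  assumes G: "maximal_consistent CS G" and "derivable_from CS {c. Cond a c \<in> G} b"
  shows "Cond a b \<in> G"
proof -
  obtain ps where ps: "\<forall>p\<in>set ps. Cond a p \<in> G" "deriv CS (imps ps b)"
    using assms(2) unfolding derivable_from_def by blast
  have "Cond a (imps ps b) \<in> G" using G ps(2) by (blast intro: mcs_deriv deriv.rcn)
  with ps(1) show ?thesis by (induction ps) (auto intro: mcs_Cond_K[OF G])
qed

lemma mcs_Cond_counterexample:
  assumes G: "maximal_consistent CS G" and "Cond a b \<notin> G"
  obtains D where "maximal_consistent CS D" "a \<in> D" "{c. Cond a c \<in> G} \<subseteq> D" "b \<notin> D"
proof -
  let ?\<Gamma> = "{c. Cond a c \<in> G}"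
  have "consistent CS (insert (Neg b) (insert a ?\<Gamma>))"
  proof (rule ccontr)
    assume "\<not> consistent CS (insert (Neg b) (insert a ?\<Gamma>))"
    then have "derivable_from CS ?\<Gamma> (Imp a b)"
      by (intro derivable_from_deduction inconsistent_insert_Neg)
    then have "Cond a (Imp a b) \<in> G" by (rule mcs_Cond_closed[OF G])
    then have "Cond a b \<in> G" using mcs_Cond_K[OF G] mcs_axiom[OF G is_axiom_Cond_refl] by blast
    then show False using assms(2) by blast
  qed
  then obtain D where "maximal_consistent CS D" "insert (Neg b) (insert a ?\<Gamma>) \<subseteq> D"
    by (rule lindenbaum)
  then show thesis using that mcs_Neg by blast
qed

definition canonical_model :: "('c, 'v, 'p) fm set \<Rightarrow> (('c, 'v, 'p) fm set set, 'c, 'v, 'p) rmodel" where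
  "canonical_model CS = (let N = {{G} | G. maximal_consistent CS G} in
     \<lparr>W = UNIV, WN = N,
      RF = (\<lambda>a w. if w \<in> N then {{D} | D. maximal_consistent CS D \<and> a \<in> D \<and> {c. Cond a c \<in> \<Union>w} \<subseteq> D}
                  else {}),
      RT = (\<lambda>t w. if w \<in> N then insert w {u. u \<notin> N \<and> {c. Just t c \<in> \<Union>w} \<subseteq> \<Union>u} else {}),
      V = (\<lambda>w. if w \<in> N then \<Union>w \<inter> range Atom else \<Union>w)\<rparr>)"

lemma canonical_model_simps:
  "W (canonical_model CS) = UNIV"
  "WN (canonical_model CS) = {{G} | G. maximal_consistent CS G}"
  "RF (canonical_model CS) a w =
     (if w \<in> WN (canonical_model CS)
      then {{D} | D. maximal_consistent CS D \<and> a \<in> D \<and> {c. Cond a c \<in> \<Union>w} \<subseteq> D} else {})"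
  "RT (canonical_model CS) t w =
     (if w \<in> WN (canonical_model CS)
      then insert w {u. u \<notin> WN (canonical_model CS) \<and> {c. Just t c \<in> \<Union>w} \<subseteq> \<Union>u} else {})"
  "V (canonical_model CS) w =
     (if w \<in> WN (canonical_model CS) then \<Union>w \<inter> range Atom else \<Union>w)"
  by (simp_all add: canonical_model_def Let_def)

lemma singleton_in_canonical_WN: "{G} \<in> WN (canonical_model CS) \<longleftrightarrow> maximal_consistent CS G"
  by (auto simp: canonical_model_simps)

lemma sat_non_normal: "u \<notin> WN M \<Longrightarrow> sat M u a \<longleftrightarrow> a \<in> V M u"
  by (cases a) auto

lemma canonical_non_normal_state:
  assumes "{} \<in> u"
  shows "u \<notin> WN (canonical_model CS)"
  using assms mcs_axiom[of CS "{}", OF _ is_axiom_Cond_refl]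
  by (auto simp: canonical_model_simps)

lemma truth_lemma_Cond:
  assumes G: "maximal_consistent CS G"
    and IH: "\<And>D. maximal_consistent CS D \<Longrightarrow> sat (canonical_model CS) {D} b \<longleftrightarrow> b \<in> D"
  shows "sat (canonical_model CS) {G} (Cond a b) \<longleftrightarrow> Cond a b \<in> G"
proof
  assume H: "sat (canonical_model CS) {G} (Cond a b)"
  show "Cond a b \<in> G"
  proof (rule ccontr)
    assume "Cond a b \<notin> G"
    with G obtain D where D: "maximal_consistent CS D" "a \<in> D" "{c. Cond a c \<in> G} \<subseteq> D" "b \<notin> D"
      by (rule mcs_Cond_counterexample)
    then have "{D} \<in> RF (canonical_model CS) a {G}"
      using G by (auto simp: canonical_model_simps)
    then show False using H G IH[OF D(1)] D(4) by (simp add: singleton_in_canonical_WN)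
  qed
next
  assume "Cond a b \<in> G"
  then have "b \<in> D" if "{c. Cond a c \<in> G} \<subseteq> D" for D using that by blast
  then show "sat (canonical_model CS) {G} (Cond a b)"
    using G IH by (auto simp: canonical_model_simps)
qed

lemma truth_lemma_Just:
  assumes G: "maximal_consistent CS G"
    and IH: "sat (canonical_model CS) {G} a \<longleftrightarrow> a \<in> G"
  shows "sat (canonical_model CS) {G} (Just t a) \<longleftrightarrow> Just t a \<in> G"
proof
  assume H: "sat (canonical_model CS) {G} (Just t a)"
  \<comment> \<open>The state \<open>{\<Gamma>, {}}\<close> is non-normal and forces exactly \<open>\<Gamma>\<close>, the formulas justified by \<open>t\<close>.\<close>
  let ?u = "{{c. Just t c \<in> G}, {}}"
  have u: "?u \<notin> WN (canonical_model CS)" by (rule canonical_non_normal_state) simp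
  then have "?u \<in> RT (canonical_model CS) t {G}"
    using G by (simp add: canonical_model_simps(4) singleton_in_canonical_WN)
  then have "sat (canonical_model CS) ?u a" using H G by (simp add: singleton_in_canonical_WN)
  then show "Just t a \<in> G" using u by (simp add: sat_non_normal canonical_model_simps(5))
next
  assume J: "Just t a \<in> G"
  have "a \<in> G" using mcs_Cond_mp[OF G mcs_axiom[OF G is_axiom_Just_factive] J] .
  moreover have "a \<in> V (canonical_model CS) u"
    if "u \<notin> WN (canonical_model CS)" "{c. Just t c \<in> G} \<subseteq> \<Union>u" for u
    using that J by (simp add: canonical_model_simps(5)) blast
  ultimately show "sat (canonical_model CS) {G} (Just t a)"
    using G IH by (auto simp: canonical_model_simps(1,4) singleton_in_canonical_WN sat_non_normal)
qed

lemma truth_lemma: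
  "maximal_consistent CS G \<Longrightarrow> sat (canonical_model CS) {G} a \<longleftrightarrow> a \<in> G"
proof (induction a arbitrary: G)
  case (Atom p)
  then show ?case by (auto simp: canonical_model_simps)
next
  case (Neg a)
  then show ?case by (simp add: singleton_in_canonical_WN mcs_Neg)
next
  case (Conj a b)
  then show ?case by (simp add: singleton_in_canonical_WN mcs_Conj)
next
  case (Imp a b)
  then show ?case by (simp add: singleton_in_canonical_WN mcs_Imp)
next
  case (Cond a b)
  then show ?case by (intro truth_lemma_Cond)
next
  case (Just t a)
  then show ?case by (intro truth_lemma_Just)
qed

lemma rel_model_canonical:
  assumes "maximal_consistent CS G"
  shows "rel_model (canonical_model CS)"
  using assms unfolding rel_model_def by (auto simp: canonical_model_simps)

lemma canonical_RT_normal: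
  assumes "maximal_consistent CS G"
  shows "u \<in> RT (canonical_model CS) t {G} \<longleftrightarrow>
    u = {G} \<or> (u \<notin> WN (canonical_model CS) \<and> {c. Just t c \<in> G} \<subseteq> \<Union>u)"
  using assms by (simp add: canonical_model_simps(4) singleton_in_canonical_WN)

lemma canonical_RT_non_normal: "u \<notin> WN (canonical_model CS) \<Longrightarrow> RT (canonical_model CS) t u = {}"
  by (simp add: canonical_model_simps(4))

lemma canonical_RT_sat:
  assumes G: "maximal_consistent CS G" and "Just t a \<in> G" and "u \<in> RT (canonical_model CS) t {G}"
  shows "sat (canonical_model CS) u a"
  using assms truth_lemma[OF G, of "Just t a"] by (simp add: singleton_in_canonical_WN)

lemma ext_canonical: "u \<in> ext (canonical_model CS) a \<longleftrightarrow> sat (canonical_model CS) u a"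
  by (simp add: ext_def canonical_model_simps(1))

lemma lpc_model_canonical:
  assumes "maximal_consistent CS G0"
  shows "lpc_model CS (canonical_model CS)"
  unfolding lpc_model_def
proof (intro conjI ballI rel_model_canonical[OF assms])
  fix w assume "w \<in> WN (canonical_model CS)"
  then obtain G where w: "w = {G}" and G: "maximal_consistent CS G"
    by (auto simp: canonical_model_simps)
  note truth = truth_lemma[OF G] and RT = canonical_RT_normal[OF G] and RT_sat = canonical_RT_sat[OF G]
  show "\<forall>a. RF (canonical_model CS) a w \<subseteq> ext (canonical_model CS) a"
    using w G by (auto simp: canonical_model_simps(3) ext_canonical truth_lemma)
  show "\<forall>a. w \<in> ext (canonical_model CS) a \<longrightarrow> w \<in> RF (canonical_model CS) a w"
    using w G mcs_Cond_mp[OF G]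
    by (auto simp: canonical_model_simps(3) singleton_in_canonical_WN ext_canonical truth)
  show "\<forall>c a. Just (TConst c) a \<in> CS \<longrightarrow> RT (canonical_model CS) (TConst c) w \<subseteq> ext (canonical_model CS) a"
    unfolding w subset_iff ext_canonical using RT_sat mcs_deriv[OF G deriv.cs] by blast
  show "\<forall>s t. RT (canonical_model CS) (TSum s t) w \<subseteq> RT (canonical_model CS) s w \<inter> RT (canonical_model CS) t w"
    using mcs_Cond_mp[OF G mcs_axiom[OF G is_axiom_Just_sum_left]]
      mcs_Cond_mp[OF G mcs_axiom[OF G is_axiom_Just_sum_right]]
    unfolding w subset_iff Int_iff RT by blast
  show "\<forall>s t. \<forall>v\<in>RT (canonical_model CS) (TApp s t) w. \<forall>a b.
      w \<in> ext (canonical_model CS) (Conj (Just s (Cond a b)) (Just t a)) \<longrightarrow> v \<in> ext (canonical_model CS) b"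
    unfolding w ext_canonical truth
    using RT_sat mcs_Cond_mp[OF G mcs_axiom[OF G is_axiom_Just_app]] by blast
  show "\<forall>t. w \<in> RT (canonical_model CS) t w"
    using RT unfolding w by blast
  show "\<forall>t. \<forall>v\<in>W (canonical_model CS). \<forall>u\<in>W (canonical_model CS).
      v \<in> RT (canonical_model CS) (TBang t) w \<and> u \<in> RT (canonical_model CS) t v \<longrightarrow> u \<in> RT (canonical_model CS) t w"
  proof (intro allI ballI impI)
    fix t v u
    assume vu: "v \<in> RT (canonical_model CS) (TBang t) w \<and> u \<in> RT (canonical_model CS) t v"
    have "v = w"
    proof (rule ccontr)
      assume "v \<noteq> w"
      then have "v \<notin> WN (canonical_model CS)" using vu RT unfolding w by blast
      then have "RT (canonical_model CS) t v = {}" by (rule canonical_RT_non_normal)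
      then show False using vu by simp
    qed
    then show "u \<in> RT (canonical_model CS) t w" using vu by simp
  qed
qed

theorem mainTheorem10:
  fixes CS :: "('c::countable, 'v::countable, 'p::countable) fm set"
    and T :: "('c, 'v, 'p) fm set" and \<phi> :: "('c, 'v, 'p) fm"
  assumes "const_spec CS"
    and "sem_conseq CS T \<phi>"
  shows "derives CS T \<phi>"
proof (rule ccontr)
  \<comment> \<open>The canonical model satisfies \<open>CS\<close> for any \<open>CS\<close>.\<close>
  assume "\<not> derives CS T \<phi>"
  then have "consistent CS (insert (Neg \<phi>) T)"
    using inconsistent_insert_Neg derivable_from_imp_derives by blast
  then obtain G where G: "maximal_consistent CS G" and TG: "insert (Neg \<phi>) T \<subseteq> G"
    by (rule lindenbaum)
  have "sat (canonical_model CS) {G} \<phi>"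
  proof (rule assms(2)[unfolded sem_conseq_def, rule_format])
    show "lpc_model CS (canonical_model CS)" by (rule lpc_model_canonical[OF G])
    show "{G} \<in> WN (canonical_model CS)" using G by (simp add: singleton_in_canonical_WN)
    show "sat (canonical_model CS) {G} \<psi>" if "\<psi> \<in> T" for \<psi>
      using that TG truth_lemma[OF G] by blast
  qed
  then have "\<phi> \<in> G" by (simp add: truth_lemma[OF G])
  moreover have "Neg \<phi> \<in> G" using TG by blast
  ultimately show False using mcs_Neg[OF G] by blast
qed

end
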